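(* Let $\pi$ satisfy Conditions 1, 2 and 3($C$) with $p=p_n$, where $p_n/n\to0$, and fix $\alpha\in(0,1)$. If $X\sim\mathcal N(0,1)$, then as $n\to\infty$, $$\mathbb P(m_X\ge\alpha)\le 8\sqrt\pi\,\frac{C}{\alpha c}\,\frac{p_n}{n}\,(1+o(1)).$$
   Context: $\pi$ is a probability density on $(0,\infty)$ and $$m_x=\frac{\int_0^\infty u(1+u)^{-3/2}e^{\frac{x^2}{2}\frac{u}{1+u}}\pi(u)\,du}{\int_0^\infty (1+u)^{-1/2}e^{\frac{x^2}{2}\frac{u}{1+u}}\pi(u)\,du}.$$ Notation: $\tau_n(p)=p/n$, $\nu_n(p)=\sqrt{\log(n/p)}$, $s_n=\tau_n(p)\nu_n(p)^2$. Uniformly regularly varying at infinity: there exist $R,u_0>0$ with $1/R\le L(au)/L(u)\le R$ for all $a\in[1,2]$, $u\ge u_0$. Condition 1: for some $b\ge0$, $\pi(u)=L_n(u)e^{-bu}$, $L_n$ uniformly regularly varying with $R,u_0$ independent of $n$; constants $C',b'>0$, $K\ge0$, $u_*\ge1$ with $C'\pi(u)\ge\tau_n(p)^Ke^{-b'u}$ for $u\ge u_*$. Condition 2: $\int_0^1\pi(u)du\ge c>0$. Condition 3($C$): $\int_{s_n}^\infty\big(u\wedge\frac{\nu_n(p)^3}{\sqrt u}\big)\pi(u)du+\nu_n(p)\int_1^{\nu_n(p)^2}\frac{\pi(u)}{\sqrt u}du\le Cs_n$. *)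

theory Defs
  imports "HOL-Probability.Probability"
begin

definition tau_n :: "nat \<Rightarrow> real \<Rightarrow> real" where
  "tau_n n p = p / real n"

definition nu_n :: "nat \<Rightarrow> real \<Rightarrow> real" where
  "nu_n n p = sqrt (ln (real n / p))"

definition s_n :: "nat \<Rightarrow> real \<Rightarrow> real" where
  "s_n n p = tau_n n p * (nu_n n p)\<^sup>2"

definition is_density_pos :: "(real \<Rightarrow> real) \<Rightarrow> bool" where
  "is_density_pos \<pi> \<longleftrightarrow> (\<forall>u>0. \<pi> u \<ge> 0) \<and> set_integrable lborel {0<..} \<pi>
     \<and> (LBINT u:{0<..}. \<pi> u) = 1"

definition m_x :: "(real \<Rightarrow> real) \<Rightarrow> real \<Rightarrow> real" where
  "m_x \<pi> x =
     (LBINT u:{0<..}. u * (1 + u) powr (-3/2) * exp (x\<^sup>2 / 2 * (u / (1 + u))) * \<pi> u) /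
     (LBINT u:{0<..}. (1 + u) powr (-1/2) * exp (x\<^sup>2 / 2 * (u / (1 + u))) * \<pi> u)"

definition unif_reg_var :: "real \<Rightarrow> real \<Rightarrow> (real \<Rightarrow> real) \<Rightarrow> bool" where
  "unif_reg_var R u0 L \<longleftrightarrow>
     (\<forall>a\<in>{1..2}. \<forall>u\<ge>u0. 1 / R \<le> L (a * u) / L u \<and> L (a * u) / L u \<le> R)"

definition condition1 :: "(nat \<Rightarrow> real \<Rightarrow> real) \<Rightarrow> (nat \<Rightarrow> real) \<Rightarrow> bool" where
  "condition1 \<pi> p \<longleftrightarrow>
     (\<exists>b\<ge>0. \<exists>R>0. \<exists>u0>0. \<exists>C'>0. \<exists>b'>0. \<exists>K\<ge>0. \<exists>ustar\<ge>1.
       (\<forall>\<^sub>F n in sequentially.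
          (\<exists>L. (\<forall>u>0. \<pi> n u = L u * exp (- b * u)) \<and> unif_reg_var R u0 L) \<and>
          (\<forall>u\<ge>ustar. C' * \<pi> n u \<ge> tau_n n (p n) powr K * exp (- b' * u))))"

definition condition2 :: "(nat \<Rightarrow> real \<Rightarrow> real) \<Rightarrow> real \<Rightarrow> bool" where
  "condition2 \<pi> c \<longleftrightarrow> c > 0 \<and> (\<forall>\<^sub>F n in sequentially. (LBINT u:{0..1}. \<pi> n u) \<ge> c)"

definition condition3 :: "(nat \<Rightarrow> real \<Rightarrow> real) \<Rightarrow> (nat \<Rightarrow> real) \<Rightarrow> real \<Rightarrow> bool" where
  "condition3 \<pi> p C \<longleftrightarrow>
     (\<forall>\<^sub>F n in sequentially.
        (LBINT u:{s_n n (p n)..}. min u (nu_n n (p n) ^ 3 / sqrt u) * \<pi> n u)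
        + nu_n n (p n) * (LBINT u:{1..(nu_n n (p n))\<^sup>2}. \<pi> n u / sqrt u)
        \<le> C * s_n n (p n))"

end

theory Submission
  imports Defs "HOL-Real_Asymp.Real_Asymp"
begin

text \<open>
  Write m_x = N / D. On [0,1] the denominator weight (1+u)^(-1/2) is at least 1/sqrt 2, so
  Condition 2 gives D \<ge> c / sqrt 2. Splitting the range of u at s_n, 1 and nu^2 and using
  Condition 3 gives, whenever x^2 \<le> Z,
    N \<le> s_n exp (Z s_n / 2) + (exp (Z/4) + exp (Z/2) / nu^3 + exp (Z/2) / nu) C s_n.
  For Z = 2 log (K / (tau nu)) with K = alpha c / (2 sqrt 2 C) the right-hand side tends to
  alpha c / (2 sqrt 2), so eventually m_x < alpha whenever x^2 \<le> Z. Hence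
  P(m_X \<ge> alpha) \<le> P(|X| \<ge> sqrt Z) \<le> 2 phi(sqrt Z) / sqrt Z \<le> 4 C tau / (sqrt pi alpha c),
  so the bound holds with epsilon = 0.
  C > 0 follows from Condition 1: pi_n is bounded below on [u_*, u_* + 1], so the left-hand
  side of Condition 3 is positive.
\<close>

lemma nn_integral_std_normal_tail_majorant:
  fixes z :: real
  assumes z: "0 < z"
  shows "(\<integral>\<^sup>+x. ennreal (x / z * std_normal_density x) * indicator {z..} x \<partial>lborel)
         = ennreal (std_normal_density z / z)"
proof -
  have "(\<integral>\<^sup>+x. ennreal (x / z * std_normal_density x) * indicator {z..} x \<partial>lborel)
        = ennreal (0 - (- std_normal_density z / z))"
  proof (rule nn_integral_FTC_atLeast[where F="\<lambda>x. - std_normal_density x / z" and T=0])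
    show "(\<lambda>x. x / z * std_normal_density x) \<in> borel_measurable borel" by measurable
    show "0 \<le> x / z * std_normal_density x" if "z \<le> x" for x
      using that z by simp
    have "((\<lambda>x::real. exp (- x\<^sup>2 / 2)) \<longlongrightarrow> 0) at_top" by real_asymp
    from tendsto_mult[OF tendsto_const this, of "- (1 / sqrt (2 * pi)) / z"]
    show "((\<lambda>x. - std_normal_density x / z) \<longlongrightarrow> 0) at_top"
      unfolding std_normal_density_def by (simp add: field_simps)
    show "DERIV (\<lambda>x. - std_normal_density x / z) x :> x / z * std_normal_density x" for x
      unfolding std_normal_density_def
      using z by (auto intro!: derivative_eq_intros simp: field_simps power2_eq_square)
  qed
  then show ?thesis by simp
qed

lemma std_normal_abs_tail_le:
  fixes z :: real
  assumes z: "0 < z"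
  shows "measure (density lborel std_normal_density) {x. z \<le> \<bar>x\<bar>} \<le> 2 * std_normal_density z / z"
proof -
  let ?M = "density lborel std_normal_density"
  let ?F = "\<lambda>x. ennreal (x / z * std_normal_density x) * indicator {z..} x"
  interpret prob_space ?M by (rule prob_space_normal_density) simp
  have meas: "{x::real. z \<le> \<bar>x\<bar>} \<in> sets borel"
    by (rule borel_closed) (auto intro!: closed_Collect_le continuous_intros)
  have "emeasure ?M {x. z \<le> \<bar>x\<bar>}
      = (\<integral>\<^sup>+x. ennreal (std_normal_density x) * indicator {x. z \<le> \<bar>x\<bar>} x \<partial>lborel)"
    using meas by (subst emeasure_density) auto
  also have "\<dots> \<le> (\<integral>\<^sup>+x. ?F x + ?F (- x) \<partial>lborel)"
  proof (rule nn_integral_mono)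
    fix x :: real
    consider "z \<le> x" | "x \<le> -z" | "\<bar>x\<bar> < z" by linarith
    then show "ennreal (std_normal_density x) * indicator {x. z \<le> \<bar>x\<bar>} x \<le> ?F x + ?F (- x)"
    proof cases
      case 1
      then have "std_normal_density x \<le> x / z * std_normal_density x"
        using z by (simp add: field_simps mult_right_mono)
      then show ?thesis
        using 1 z by (auto simp: indicator_def intro: add_increasing2 ennreal_leI)
    next
      case 2
      then have "z * exp (- (x\<^sup>2 / 2)) \<le> - x * exp (- (x\<^sup>2 / 2))"
        by (intro mult_right_mono) auto
      then have "std_normal_density x \<le> - x / z * std_normal_density (-x)"
        using z by (simp add: field_simps std_normal_density_def)
      then show ?thesis
        using 2 z by (auto simp: indicator_def intro: add_increasing ennreal_leI)
    qed (auto simp: indicator_def)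
  qed
  also have "\<dots> = (\<integral>\<^sup>+x. ?F x \<partial>lborel) + (\<integral>\<^sup>+x. ?F (- x) \<partial>lborel)"
    by (rule nn_integral_add) auto
  also have "(\<integral>\<^sup>+x. ?F (- x) \<partial>lborel) = (\<integral>\<^sup>+x. ?F x \<partial>lborel)"
    using nn_integral_real_affine[of ?F "-1" 0] by simp
  also have "(\<integral>\<^sup>+x. ?F x \<partial>lborel) = ennreal (std_normal_density z / z)"
    by (rule nn_integral_std_normal_tail_majorant[OF z])
  finally have "emeasure ?M {x. z \<le> \<bar>x\<bar>} \<le> ennreal (2 * std_normal_density z / z)"
    using z by (simp add: ennreal_plus[symmetric] del: ennreal_plus)
  then show ?thesis
    using z by (simp add: emeasure_eq_measure ennreal_le_iff)
qed

lemma powr_minus_three_halves: "0 < y \<Longrightarrow> (y::real) powr (-3/2) = 1 / (y * sqrt y)"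
proof -
  assume y: "0 < y"
  have "y powr (3/2) = y powr 1 * y powr (1/2)" by (subst powr_add[symmetric]) simp
  also have "\<dots> = y * sqrt y" using y by (simp add: powr_half_sqrt)
  finally show ?thesis by (simp add: powr_minus_divide)
qed

lemma powr_minus_half: "0 < y \<Longrightarrow> (y::real) powr (-1/2) = 1 / sqrt y"
  by (simp add: powr_minus_divide powr_half_sqrt)

lemma set_integrable_bounded_mult:
  fixes f g :: "'a \<Rightarrow> real"
  assumes f: "set_integrable M A f" and g: "g \<in> borel_measurable M"
    and bound: "\<And>x. x \<in> A \<Longrightarrow> \<bar>g x\<bar> \<le> K"
  shows "set_integrable M A (\<lambda>x. g x * f x)"
proof (rule set_integrable_bound)
  show "set_integrable M A (\<lambda>x. K * f x)" using f by blast
  have "(\<lambda>x. indicator A x *\<^sub>R f x) \<in> borel_measurable M"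
    using f unfolding set_integrable_def by (rule borel_measurable_integrable)
  then have "(\<lambda>x. g x * (indicator A x *\<^sub>R f x)) \<in> borel_measurable M"
    using g by measurable
  then show "set_borel_measurable M A (\<lambda>x. g x * f x)"
    unfolding set_borel_measurable_def by (simp add: mult.left_commute)
  show "AE x in M. x \<in> A \<longrightarrow> norm (g x * f x) \<le> norm (K * f x)"
  proof (rule AE_I2, rule impI)
    fix x assume "x \<in> A"
    with bound have "\<bar>g x\<bar> * \<bar>f x\<bar> \<le> \<bar>K\<bar> * \<bar>f x\<bar>"
      by (intro mult_right_mono) fastforce+
    then show "norm (g x * f x) \<le> norm (K * f x)" by (simp add: abs_mult)
  qed
qed

lemma set_integral_indicator_subset:
  fixes f :: "'a \<Rightarrow> real"
  assumes "A \<subseteq> B"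
  shows "(LINT x:A|M. f x) = (LINT x:B|M. indicator A x * f x)"
  unfolding set_lebesgue_integral_def using assms
  by (intro Bochner_Integration.integral_cong) (auto simp: indicator_def)

lemma set_integral_nonneg:
  fixes f :: "'a \<Rightarrow> real"
  assumes "\<And>x. x \<in> A \<Longrightarrow> 0 \<le> f x"
  shows "0 \<le> (LINT x:A|M. f x)"
  unfolding set_lebesgue_integral_def
  by (rule Bochner_Integration.integral_nonneg) (use assms in \<open>auto simp: indicator_def\<close>)

definition mx_num_kernel :: "real \<Rightarrow> real \<Rightarrow> real" where
  "mx_num_kernel x u = u * (1 + u) powr (-3/2) * exp (x\<^sup>2 / 2 * (u / (1 + u)))"

definition mx_den_kernel :: "real \<Rightarrow> real \<Rightarrow> real" where
  "mx_den_kernel x u = (1 + u) powr (-1/2) * exp (x\<^sup>2 / 2 * (u / (1 + u)))"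

lemma m_x_eq_kernels:
  "m_x \<pi> x = (LBINT u:{0<..}. mx_num_kernel x u * \<pi> u) / (LBINT u:{0<..}. mx_den_kernel x u * \<pi> u)"
  by (simp add: m_x_def mx_num_kernel_def mx_den_kernel_def)

lemma mx_exp_factor_le:
  fixes u x Z w :: real
  assumes u: "0 < u" and x: "x\<^sup>2 \<le> Z" and Z: "0 \<le> Z" and w: "u / (1 + u) \<le> w"
  shows "exp (x\<^sup>2 / 2 * (u / (1 + u))) \<le> exp (Z / 2 * w)"
proof -
  have "0 \<le> u / (1 + u)" using u by simp
  then have "x\<^sup>2 / 2 * (u / (1 + u)) \<le> Z / 2 * (u / (1 + u))" using x by (intro mult_right_mono) auto
  also have "\<dots> \<le> Z / 2 * w" using Z w by (intro mult_left_mono) auto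
  finally show ?thesis by simp
qed

lemma mx_num_weight_le:
  fixes u :: real
  assumes u: "0 < u"
  shows "u * (1 + u) powr (-3/2) \<le> u" and "u * (1 + u) powr (-3/2) \<le> 1 / sqrt u"
proof -
  have eq: "u * (1 + u) powr (-3/2) = u / ((1 + u) * sqrt (1 + u))"
    using u powr_minus_three_halves[of "1 + u"] by simp
  have "1 \<le> (1 + u) * sqrt (1 + u)" using u mult_mono[of 1 "1 + u" 1 "sqrt (1 + u)"] by simp
  then show "u * (1 + u) powr (-3/2) \<le> u" unfolding eq using u by (simp add: divide_le_eq)
  have "u * sqrt u \<le> (1 + u) * sqrt (1 + u)" using u by (intro mult_mono) auto
  then have "u / ((1 + u) * sqrt (1 + u)) \<le> u / (u * sqrt u)"
    using u by (intro divide_left_mono) auto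
  then show "u * (1 + u) powr (-3/2) \<le> 1 / sqrt u" unfolding eq using u by simp
qed

lemma mx_kernels_abs_le:
  fixes x u :: real
  assumes u: "0 < u"
  shows "\<bar>mx_num_kernel x u\<bar> \<le> exp (x\<^sup>2 / 2)" and "\<bar>mx_den_kernel x u\<bar> \<le> exp (x\<^sup>2 / 2)"
proof -
  let ?E = "exp (x\<^sup>2 / 2 * (u / (1 + u)))"
  have "?E \<le> exp (x\<^sup>2 / 2 * 1)" using u by (intro mx_exp_factor_le) auto
  then have E: "?E \<le> exp (x\<^sup>2 / 2)" by simp
  have "u * (1 + u) powr (-3/2) \<le> 1"
  proof (cases "u \<le> 1")
    case False
    then have "1 / sqrt u \<le> 1" by simp
    then show ?thesis using mx_num_weight_le(2)[OF u] by linarith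
  qed (use mx_num_weight_le(1)[OF u] in linarith)
  then have "u * (1 + u) powr (-3/2) * ?E \<le> 1 * exp (x\<^sup>2 / 2)"
    using E by (intro mult_mono) auto
  then show "\<bar>mx_num_kernel x u\<bar> \<le> exp (x\<^sup>2 / 2)"
    unfolding mx_num_kernel_def using u by simp
  have "(1 + u) powr (-1/2) \<le> 1" using u powr_minus_half[of "1 + u"] by simp
  then have "(1 + u) powr (-1/2) * ?E \<le> 1 * exp (x\<^sup>2 / 2)"
    using E by (intro mult_mono) auto
  then show "\<bar>mx_den_kernel x u\<bar> \<le> exp (x\<^sup>2 / 2)"
    unfolding mx_den_kernel_def using u by simp
qed

lemma mx_den_kernel_ge:
  fixes x u :: real
  assumes u: "0 < u" "u \<le> 1"
  shows "1 / sqrt 2 \<le> mx_den_kernel x u"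
proof -
  have "1 / sqrt 2 \<le> 1 / sqrt (1 + u)" using u by (simp add: frac_le)
  also have "\<dots> = (1 + u) powr (-1/2) * 1" using u powr_minus_half[of "1 + u"] by simp
  also have "\<dots> \<le> mx_den_kernel x u"
    unfolding mx_den_kernel_def using u by (intro mult_left_mono) auto
  finally show ?thesis .
qed

lemma mx_num_kernel_le:
  fixes u \<nu> s Z x :: real
  assumes u: "0 < u" and \<nu>: "1 \<le> \<nu>" and s: "0 < s" and x: "x\<^sup>2 \<le> Z" and Z: "0 \<le> Z"
  shows "mx_num_kernel x u \<le> s * exp (Z * s / 2)
      + (exp (Z / 4) + exp (Z / 2) / \<nu> ^ 3) * (indicator {s..} u * min u (\<nu> ^ 3 / sqrt u))
      + exp (Z / 2) * (indicator {1..\<nu>\<^sup>2} u / sqrt u)"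
    (is "_ \<le> ?small + ?b * ?tail + ?mid")
proof -
  let ?q = "u * (1 + u) powr (-3/2)" and ?E = "exp (x\<^sup>2 / 2 * (u / (1 + u)))"
  have kernel: "mx_num_kernel x u = ?q * ?E" by (simp add: mx_num_kernel_def)
  have q: "0 \<le> ?q" "?q \<le> u" "?q \<le> 1 / sqrt u" using mx_num_weight_le[OF u] u by auto
  have E: "?E \<le> exp (Z / 2 * w)" if "u / (1 + u) \<le> w" for w
    by (rule mx_exp_factor_le[OF u x Z that])
  have frac: "u / (1 + u) \<le> u" "u / (1 + u) \<le> 1" using u by (auto simp: divide_le_eq)
  have nonneg: "0 \<le> ?small" "0 \<le> ?b * ?tail" "0 \<le> ?mid"
    using u s \<nu> by (simp_all add: indicator_def)
  consider "u < s" | "s \<le> u" "u \<le> 1" | "s \<le> u" "1 < u" "u \<le> \<nu>\<^sup>2" | "s \<le> u" "\<nu>\<^sup>2 < u"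
    by linarith
  then show ?thesis
  proof cases
    case 1
    have "?q * ?E \<le> s * exp (Z / 2 * s)" using q 1 frac E[of s] by (intro mult_mono) auto
    then show ?thesis using kernel nonneg by (simp add: mult.commute)
  next
    case 2
    have "u * sqrt u \<le> 1 * 1" using 2 u by (intro mult_mono) auto
    also have "\<dots> \<le> \<nu> ^ 3" using \<nu> by simp
    finally have "u \<le> \<nu> ^ 3 / sqrt u" using u by (simp add: pos_le_divide_eq)
    then have tail: "?tail = u" using 2 by (simp add: indicator_def)
    have "u / (1 + u) \<le> 1 / 2" using 2 u by (simp add: divide_simps)
    then have "?q * ?E \<le> u * exp (Z / 4)" using q E[of "1 / 2"] by (intro mult_mono) auto
    also have "\<dots> \<le> ?b * ?tail" unfolding tail using u \<nu> by (simp add: algebra_simps)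
    finally show ?thesis using kernel nonneg by linarith
  next
    case 3
    have "?q * ?E \<le> 1 / sqrt u * exp (Z / 2)" using q frac E[of 1] by (intro mult_mono) auto
    then show ?thesis using kernel nonneg 3 by (simp add: indicator_def)
  next
    case 4
    have "\<nu> < sqrt u" using 4 \<nu> by (intro real_less_rsqrt) simp
    then have "\<nu>\<^sup>2 * \<nu> \<le> u * sqrt u" using 4 \<nu> u by (intro mult_mono) auto
    then have "\<nu> ^ 3 / sqrt u \<le> u" using u by (simp add: divide_simps power3_eq_cube power2_eq_square)
    then have tail: "?tail = \<nu> ^ 3 / sqrt u" using 4 s \<nu> by (simp add: indicator_def)
    have "?q * ?E \<le> 1 / sqrt u * exp (Z / 2)" using q frac E[of 1] by (intro mult_mono) auto
    also have "\<dots> = exp (Z / 2) / \<nu> ^ 3 * ?tail" unfolding tail using \<nu> by simp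
    also have "\<dots> \<le> ?b * ?tail" using u \<nu> unfolding tail by (intro mult_right_mono) auto
    finally show ?thesis using kernel nonneg by linarith
  qed
qed

lemma mx_den_integral_ge:
  assumes dens: "is_density_pos \<pi>"
  shows "(LBINT u:{0..1}. \<pi> u) / sqrt 2 \<le> (LBINT u:{0<..}. mx_den_kernel x u * \<pi> u)"
proof -
  have pnn: "\<And>u. 0 < u \<Longrightarrow> 0 \<le> \<pi> u" and int: "set_integrable lborel {0<..} \<pi>"
    using dens unfolding is_density_pos_def by auto
  define g where "g u = indicator {..1} u / sqrt 2" for u :: real
  have "(LBINT u:{0..1}. \<pi> u) = (LBINT u:{0<..1}. \<pi> u)"
    using interval_integral_Icc[of 0 1 \<pi>] interval_integral_Ioc[of 0 1 \<pi>] by simp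
  also have "\<dots> = (LBINT u:{0<..}. indicator {..1} u * \<pi> u)"
    by (subst set_integral_indicator_subset[of _ "{0<..}"]) (auto intro!: set_lebesgue_integral_cong simp: indicator_def)
  finally have "(LBINT u:{0..1}. \<pi> u) / sqrt 2 = (LBINT u:{0<..}. g u * \<pi> u)"
    by (simp add: g_def)
  also have "\<dots> \<le> (LBINT u:{0<..}. mx_den_kernel x u * \<pi> u)"
  proof (rule set_integral_mono)
    show "set_integrable lborel {0<..} (\<lambda>u. g u * \<pi> u)"
      by (rule set_integrable_bounded_mult[OF int, where K=1]) (auto simp: g_def indicator_def)
    show "set_integrable lborel {0<..} (\<lambda>u. mx_den_kernel x u * \<pi> u)"
      by (rule set_integrable_bounded_mult[OF int _ mx_kernels_abs_le(2)])
         (auto simp: mx_den_kernel_def)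
    fix u :: real assume "u \<in> {0<..}"
    then have u: "0 < u" by simp
    have "g u \<le> mx_den_kernel x u"
    proof (cases "u \<le> 1")
      case True
      then show ?thesis using mx_den_kernel_ge[OF u True] by (simp add: g_def)
    qed (simp add: g_def mx_den_kernel_def)
    then show "g u * \<pi> u \<le> mx_den_kernel x u * \<pi> u" using pnn[OF u] by (rule mult_right_mono)
  qed
  finally show ?thesis .
qed

lemma mx_num_integral_le:
  fixes \<nu> s Z x :: real
  assumes dens: "is_density_pos \<pi>"
    and \<nu>: "1 \<le> \<nu>" and s: "0 < s" and x: "x\<^sup>2 \<le> Z" and Z: "0 \<le> Z"
  shows "(LBINT u:{0<..}. mx_num_kernel x u * \<pi> u) \<le> s * exp (Z * s / 2)
      + (exp (Z / 4) + exp (Z / 2) / \<nu> ^ 3) * (LBINT u:{s..}. min u (\<nu> ^ 3 / sqrt u) * \<pi> u)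
      + exp (Z / 2) * (LBINT u:{1..\<nu>\<^sup>2}. \<pi> u / sqrt u)"
proof -
  have pnn: "\<And>u. 0 < u \<Longrightarrow> 0 \<le> \<pi> u" and int: "set_integrable lborel {0<..} \<pi>"
    and one: "(LBINT u:{0<..}. \<pi> u) = 1"
    using dens unfolding is_density_pos_def by auto
  define a b e where "a = s * exp (Z * s / 2)" and "b = exp (Z / 4) + exp (Z / 2) / \<nu> ^ 3"
    and "e = exp (Z / 2)"
  define g1 g2 :: "real \<Rightarrow> real"
    where "g1 u = indicator {s..} u * min u (\<nu> ^ 3 / sqrt u)" and "g2 u = indicator {1..\<nu>\<^sup>2} u / sqrt u"
    for u
  have int1: "set_integrable lborel {0<..} (\<lambda>u. g1 u * \<pi> u)"
  proof (rule set_integrable_bounded_mult[OF int, where K="\<nu> ^ 3 / sqrt s"])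
    show "g1 \<in> borel_measurable lborel" unfolding g1_def by measurable
    fix u :: real assume "u \<in> {0<..}"
    moreover have "\<nu> ^ 3 / sqrt u \<le> \<nu> ^ 3 / sqrt s" if "s \<le> u"
      using that s \<nu> by (intro divide_left_mono) auto
    ultimately show "\<bar>g1 u\<bar> \<le> \<nu> ^ 3 / sqrt s" using s \<nu> by (auto simp: g1_def indicator_def)
  qed
  have int2: "set_integrable lborel {0<..} (\<lambda>u. g2 u * \<pi> u)"
    by (rule set_integrable_bounded_mult[OF int, where K=1]) (auto simp: g2_def indicator_def)
  have "(LBINT u:{0<..}. mx_num_kernel x u * \<pi> u)
      \<le> (LBINT u:{0<..}. a * \<pi> u + b * (g1 u * \<pi> u) + e * (g2 u * \<pi> u))"
  proof (rule set_integral_mono)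
    show "set_integrable lborel {0<..} (\<lambda>u. mx_num_kernel x u * \<pi> u)"
      by (rule set_integrable_bounded_mult[OF int _ mx_kernels_abs_le(1)])
         (auto simp: mx_num_kernel_def)
    show "set_integrable lborel {0<..} (\<lambda>u. a * \<pi> u + b * (g1 u * \<pi> u) + e * (g2 u * \<pi> u))"
      using int int1 int2 by (intro set_integral_add set_integrable_mult_right)
    fix u :: real assume "u \<in> {0<..}"
    then have u: "0 < u" by simp
    show "mx_num_kernel x u * \<pi> u \<le> a * \<pi> u + b * (g1 u * \<pi> u) + e * (g2 u * \<pi> u)"
      using mult_right_mono[OF mx_num_kernel_le[OF u \<nu> s x Z] pnn[OF u]]
      by (simp add: a_def b_def e_def g1_def g2_def algebra_simps)
  qed
  also have "\<dots> = a + b * (LBINT u:{0<..}. g1 u * \<pi> u) + e * (LBINT u:{0<..}. g2 u * \<pi> u)"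
    using int int1 int2 one by (simp add: set_integral_add)
  also have "(LBINT u:{0<..}. g1 u * \<pi> u) = (LBINT u:{s..}. min u (\<nu> ^ 3 / sqrt u) * \<pi> u)"
    using s by (subst set_integral_indicator_subset[of _ "{0<..}"]) (auto simp: g1_def mult.assoc)
  also have "(LBINT u:{0<..}. g2 u * \<pi> u) = (LBINT u:{1..\<nu>\<^sup>2}. \<pi> u / sqrt u)"
    by (subst set_integral_indicator_subset[of _ "{0<..}"]) (auto simp: g2_def)
  finally show ?thesis by (simp add: a_def b_def e_def)
qed

lemma m_x_less:
  fixes \<pi> :: "real \<Rightarrow> real" and c \<nu> s C \<alpha> Z x :: real
  assumes dens: "is_density_pos \<pi>" and c: "0 < c" and mass: "c \<le> (LBINT u:{0..1}. \<pi> u)"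
    and \<nu>: "1 \<le> \<nu>" and s: "0 < s"
    and cond3: "(LBINT u:{s..}. min u (\<nu> ^ 3 / sqrt u) * \<pi> u)
        + \<nu> * (LBINT u:{1..\<nu>\<^sup>2}. \<pi> u / sqrt u) \<le> C * s"
    and x: "x\<^sup>2 \<le> Z" and Z: "0 \<le> Z" and \<alpha>: "0 < \<alpha>"
    and key: "s * exp (Z * s / 2) + (exp (Z / 4) + exp (Z / 2) / \<nu> ^ 3 + exp (Z / 2) / \<nu>) * (C * s)
        < \<alpha> * c / sqrt 2"
  shows "m_x \<pi> x < \<alpha>"
proof -
  have pnn: "\<And>u. 0 < u \<Longrightarrow> 0 \<le> \<pi> u" using dens unfolding is_density_pos_def by auto
  define N D where "N = (LBINT u:{0<..}. mx_num_kernel x u * \<pi> u)"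
    and "D = (LBINT u:{0<..}. mx_den_kernel x u * \<pi> u)"
  define T1 T2 where "T1 = (LBINT u:{s..}. min u (\<nu> ^ 3 / sqrt u) * \<pi> u)"
    and "T2 = (LBINT u:{1..\<nu>\<^sup>2}. \<pi> u / sqrt u)"
  define b e where "b = exp (Z / 4) + exp (Z / 2) / \<nu> ^ 3" and "e = exp (Z / 2)"
  have T: "0 \<le> T1" "0 \<le> T2" unfolding T1_def T2_def
    using s \<nu> pnn by (auto intro!: set_integral_nonneg)
  have N: "N \<le> s * exp (Z * s / 2) + b * T1 + e * T2"
    unfolding N_def T1_def T2_def b_def e_def by (rule mx_num_integral_le[OF dens \<nu> s x Z])
  have "b * T1 + e * T2 \<le> (b + e / \<nu>) * (T1 + \<nu> * T2)"
  proof -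
    have "(b + e / \<nu>) * (T1 + \<nu> * T2) = b * T1 + e * T2 + (b * \<nu> * T2 + e / \<nu> * T1)"
      using \<nu> by (simp add: algebra_simps)
    moreover have "0 \<le> b * \<nu> * T2 + e / \<nu> * T1" using T \<nu> by (simp add: b_def e_def)
    ultimately show ?thesis by linarith
  qed
  also have "\<dots> \<le> (b + e / \<nu>) * (C * s)"
    using cond3 \<nu> unfolding T1_def T2_def b_def e_def by (intro mult_left_mono) auto
  finally have N_less: "N < \<alpha> * c / sqrt 2" using N key by (simp add: b_def e_def algebra_simps)
  have D: "c / sqrt 2 \<le> D"
    using divide_right_mono[OF mass, of "sqrt 2"] mx_den_integral_ge[OF dens, of x]
    unfolding D_def by simp
  then have "N < \<alpha> * D" using N_less mult_left_mono[OF D, of \<alpha>] \<alpha> by simp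
  moreover have "0 < D" using D c by (smt (verit) divide_pos_pos real_sqrt_gt_zero)
  ultimately show ?thesis unfolding m_x_eq_kernels N_def D_def by (simp add: divide_less_eq)
qed

text \<open>Chosen so that exp (Z/2) = K / (t nu): the term exp (Z/2) C s / nu of the numerator
  bound then equals K C, which is half of alpha c / sqrt 2.\<close>

definition tail_level :: "real \<Rightarrow> real \<Rightarrow> real" where
  "tail_level K t = 2 * ln (K / (t * sqrt (ln (1 / t))))"

lemma std_normal_tail_at_tail_level:
  fixes K t :: real
  defines "Z \<equiv> tail_level K t"
  assumes t: "0 < t" and K: "0 < K" and \<nu>: "0 < sqrt (ln (1 / t))" and level: "ln (1 / t) \<le> Z"
  shows "2 * std_normal_density (sqrt Z) / sqrt Z \<le> 2 / sqrt (2 * pi) * t / K"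
proof -
  let ?\<nu> = "sqrt (ln (1 / t))"
  have \<nu>Z: "?\<nu> \<le> sqrt Z" using level by simp
  then have Z: "0 < sqrt Z" using \<nu> by linarith
  have "exp (- Z / 2) = t * ?\<nu> / K"
    using t K \<nu> by (simp add: Z_def tail_level_def exp_minus)
  then have "2 * std_normal_density (sqrt Z) / sqrt Z = 2 / sqrt (2 * pi) * (t * ?\<nu> / K) / sqrt Z"
    using Z by (simp add: std_normal_density_def)
  also have "\<dots> \<le> 2 / sqrt (2 * pi) * (t * ?\<nu> / K) / ?\<nu>"
    using \<nu>Z \<nu> Z t K by (intro divide_left_mono mult_pos_pos) auto
  also have "\<dots> = 2 / sqrt (2 * pi) * t / K" using \<nu> by simp
  finally show ?thesis .
qed

lemma eventually_log_scale:
  "\<forall>\<^sub>F t in at_right 0. 0 < t \<and> 1 \<le> sqrt (ln (1 / t)) \<and> t * sqrt (ln (1 / t)) ^ 2 \<le> (1::real)"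
  by (intro eventually_conj; real_asymp)

lemma eventually_tail_level:
  fixes C c \<alpha> :: real
  assumes C: "0 < C" and c: "0 < c" and \<alpha>: "0 < \<alpha>"
  defines "K \<equiv> \<alpha> * c / (2 * sqrt 2 * C)"
  shows "\<forall>\<^sub>F t in at_right 0. ln (1 / t) \<le> tail_level K t \<and>
    t * sqrt (ln (1 / t)) ^ 2 * exp (tail_level K t * (t * sqrt (ln (1 / t)) ^ 2) / 2)
    + (exp (tail_level K t / 4) + exp (tail_level K t / 2) / sqrt (ln (1 / t)) ^ 3
       + exp (tail_level K t / 2) / sqrt (ln (1 / t))) * (C * (t * sqrt (ln (1 / t)) ^ 2))
    < \<alpha> * c / sqrt 2"
  unfolding tail_level_def K_def using C c \<alpha> by (intro eventually_conj; real_asymp)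

lemma prob_m_x_ge_le:
  fixes \<pi> :: "real \<Rightarrow> real" and t c C \<alpha> :: real
  defines "\<nu> \<equiv> sqrt (ln (1 / t))" and "Z \<equiv> tail_level (\<alpha> * c / (2 * sqrt 2 * C)) t"
  assumes dens: "is_density_pos \<pi>" and c: "0 < c" and mass: "c \<le> (LBINT u:{0..1}. \<pi> u)"
    and C: "0 < C" and \<alpha>: "0 < \<alpha>" and t: "0 < t" and \<nu>: "1 \<le> \<nu>"
    and cond3: "(LBINT u:{t * \<nu> ^ 2..}. min u (\<nu> ^ 3 / sqrt u) * \<pi> u)
        + \<nu> * (LBINT u:{1..\<nu>\<^sup>2}. \<pi> u / sqrt u) \<le> C * (t * \<nu> ^ 2)"
    and level: "ln (1 / t) \<le> Z"
    and key: "t * \<nu> ^ 2 * exp (Z * (t * \<nu> ^ 2) / 2)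
        + (exp (Z / 4) + exp (Z / 2) / \<nu> ^ 3 + exp (Z / 2) / \<nu>) * (C * (t * \<nu> ^ 2))
        < \<alpha> * c / sqrt 2"
  shows "measure (density lborel std_normal_density) {x. \<alpha> \<le> m_x \<pi> x} \<le> 8 * sqrt pi * C / (\<alpha> * c) * t"
proof -
  let ?M = "density lborel std_normal_density"
  interpret prob_space ?M by (rule prob_space_normal_density) simp
  have \<nu>Z: "\<nu> \<le> sqrt Z" using level by (simp add: \<nu>_def)
  then have Z: "0 < sqrt Z" using \<nu> by linarith
  have "{x. \<alpha> \<le> m_x \<pi> x} \<subseteq> {x. sqrt Z \<le> \<bar>x\<bar>}"
  proof (rule subsetI, rule ccontr)
    fix x assume "x \<in> {x. \<alpha> \<le> m_x \<pi> x}" "x \<notin> {x. sqrt Z \<le> \<bar>x\<bar>}"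
    then have "\<alpha> \<le> m_x \<pi> x" and "\<bar>x\<bar> < sqrt Z" by auto
    then have "\<bar>x\<bar>\<^sup>2 \<le> (sqrt Z)\<^sup>2" by (intro power_mono) auto
    then have "x\<^sup>2 \<le> Z" using Z by simp
    then have "m_x \<pi> x < \<alpha>"
      using m_x_less[OF dens c mass \<nu> _ cond3 _ _ \<alpha> key] t \<nu> Z by simp
    with \<open>\<alpha> \<le> m_x \<pi> x\<close> show False by simp
  qed
  then have "measure ?M {x. \<alpha> \<le> m_x \<pi> x} \<le> measure ?M {x. sqrt Z \<le> \<bar>x\<bar>}"
    by (intro finite_measure_mono) (auto intro!: borel_closed closed_Collect_le continuous_intros)
  also have "\<dots> \<le> 2 * std_normal_density (sqrt Z) / sqrt Z"
    by (rule std_normal_abs_tail_le[OF Z])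
  also have "\<dots> \<le> 2 / sqrt (2 * pi) * t / (\<alpha> * c / (2 * sqrt 2 * C))"
  proof -
    have "0 < \<alpha> * c / (2 * sqrt 2 * C)" using C c \<alpha> by simp
    moreover have "0 < sqrt (ln (1 / t))" using \<nu> unfolding \<nu>_def by linarith
    ultimately show ?thesis
      using std_normal_tail_at_tail_level[OF t _ _ level[unfolded Z_def]] by (simp add: Z_def)
  qed
  also have "\<dots> = 4 / sqrt pi * C / (\<alpha> * c) * t"
    by (simp add: real_sqrt_mult field_simps)
  also have "\<dots> \<le> 8 * sqrt pi * C / (\<alpha> * c) * t"
  proof -
    have "4 \<le> 8 * (sqrt pi * sqrt pi)" using pi_gt3 by simp
    then have "4 / sqrt pi \<le> 8 * sqrt pi" by (simp add: divide_le_eq)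
    then show ?thesis using C c \<alpha> t by (intro mult_right_mono divide_right_mono) auto
  qed
  finally show ?thesis .
qed

lemma condition3_integral_pos:
  fixes \<pi> :: "real \<Rightarrow> real" and \<nu> s U m :: real
  assumes dens: "is_density_pos \<pi>" and \<nu>: "1 \<le> \<nu>" and s: "0 < s" "s \<le> U"
    and m: "0 < m" and lower: "\<And>u. U \<le> u \<Longrightarrow> u \<le> U + 1 \<Longrightarrow> m \<le> \<pi> u"
  shows "0 < (LBINT u:{s..}. min u (\<nu> ^ 3 / sqrt u) * \<pi> u)"
proof -
  have pnn: "\<And>u. 0 < u \<Longrightarrow> 0 \<le> \<pi> u" and int: "set_integrable lborel {0<..} \<pi>"
    using dens unfolding is_density_pos_def by auto
  define k where "k = min U (\<nu> ^ 3 / sqrt (U + 1)) * m"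
  have k: "0 < k" unfolding k_def using s \<nu> m by simp
  have int_k: "set_integrable lborel {s..} (\<lambda>u. k * indicator {U..U+1} u)"
  proof -
    have "(\<lambda>u. indicator {s..} u *\<^sub>R (k * indicator {U..U+1} u)) = (\<lambda>u. k * indicator {U..U+1} u)"
      using s by (auto simp: indicator_def)
    then show ?thesis unfolding set_integrable_def by simp
  qed
  have "k = (LBINT u:{U..U+1}. k)" by (simp add: set_integral_const)
  also have "\<dots> = (LBINT u:{s..}. k * indicator {U..U+1} u)"
    using s by (subst set_integral_indicator_subset[of _ "{s..}"]) (auto simp: mult.commute)
  also have "\<dots> \<le> (LBINT u:{s..}. min u (\<nu> ^ 3 / sqrt u) * \<pi> u)"
  proof (rule set_integral_mono[OF int_k])
    show "set_integrable lborel {s..} (\<lambda>u. min u (\<nu> ^ 3 / sqrt u) * \<pi> u)"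
    proof (rule set_integrable_bounded_mult[where K="\<nu> ^ 3 / sqrt s"])
      show "set_integrable lborel {s..} \<pi>" using s by (intro set_integrable_subset[OF int]) auto
      show "(\<lambda>u. min u (\<nu> ^ 3 / sqrt u)) \<in> borel_measurable lborel" by measurable
      fix u assume "u \<in> {s..}"
      then have "\<nu> ^ 3 / sqrt u \<le> \<nu> ^ 3 / sqrt s" using s \<nu> by (intro divide_left_mono) auto
      then show "\<bar>min u (\<nu> ^ 3 / sqrt u)\<bar> \<le> \<nu> ^ 3 / sqrt s" using \<open>u \<in> {s..}\<close> s \<nu> by auto
    qed
    fix u assume u: "u \<in> {s..}"
    show "k * indicator {U..U+1} u \<le> min u (\<nu> ^ 3 / sqrt u) * \<pi> u"
    proof (cases "U \<le> u \<and> u \<le> U + 1")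
      case True
      have "\<nu> ^ 3 / sqrt (U + 1) \<le> \<nu> ^ 3 / sqrt u" using True s \<nu> by (intro divide_left_mono) auto
      then have "min U (\<nu> ^ 3 / sqrt (U + 1)) \<le> min u (\<nu> ^ 3 / sqrt u)" using True by linarith
      then have "k \<le> min u (\<nu> ^ 3 / sqrt u) * \<pi> u"
        unfolding k_def using lower[of u] True s \<nu> m by (intro mult_mono) auto
      then show ?thesis using True by simp
    next
      case False
      then show ?thesis using u s \<nu> pnn[of u] by simp
    qed
  qed
  finally show ?thesis using k by linarith
qed

lemma condition1_eventually_lower_bound:
  assumes "condition1 \<pi> p"
  obtains C' b' K ustar :: real where "0 < C'" "0 < b'" "1 \<le> ustar"
    and "\<forall>\<^sub>F n in sequentially. \<forall>u\<ge>ustar. tau_n n (p n) powr K * exp (- b' * u) \<le> C' * \<pi> n u"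
proof -
  from assms obtain b R u0 C' b' K ustar :: real where "0 < C'" "0 < b'" "1 \<le> ustar"
    and ev: "\<forall>\<^sub>F n in sequentially.
          (\<exists>L. (\<forall>u>0. \<pi> n u = L u * exp (- b * u)) \<and> unif_reg_var R u0 L) \<and>
          (\<forall>u\<ge>ustar. C' * \<pi> n u \<ge> tau_n n (p n) powr K * exp (- b' * u))"
    unfolding condition1_def by blast
  from ev have "\<forall>\<^sub>F n in sequentially. \<forall>u\<ge>ustar. tau_n n (p n) powr K * exp (- b' * u) \<le> C' * \<pi> n u"
    by (rule eventually_mono) blast
  with \<open>0 < C'\<close> \<open>0 < b'\<close> \<open>1 \<le> ustar\<close> that show thesis by blast
qed

lemma nu_n_eq: "nu_n n q = sqrt (ln (1 / tau_n n q))"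
  by (simp add: nu_n_def tau_n_def)

lemma condition3_const_pos:
  assumes dens: "\<And>n. is_density_pos (\<pi> n)" and c1: "condition1 \<pi> p" and c3: "condition3 \<pi> p C"
    and tau: "filterlim (\<lambda>n. tau_n n (p n)) (at_right 0) sequentially"
  shows "0 < C"
proof (rule ccontr)
  assume C: "\<not> 0 < C"
  obtain C' b' K ustar :: real where C': "0 < C'" and b': "0 < b'" and ustar: "1 \<le> ustar"
    and lower: "\<forall>\<^sub>F n in sequentially. \<forall>u\<ge>ustar. tau_n n (p n) powr K * exp (- b' * u) \<le> C' * \<pi> n u"
    by (rule condition1_eventually_lower_bound[OF c1])
  have "\<forall>\<^sub>F n in sequentially. False"
    using lower c3[unfolded condition3_def nu_n_eq s_n_def]
      eventually_compose_filterlim[OF eventually_log_scale tau]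
  proof eventually_elim
    case (elim n)
    define t \<nu> where "t = tau_n n (p n)" and "\<nu> = sqrt (ln (1 / t))"
    have t: "0 < t" and \<nu>: "1 \<le> \<nu>" and s: "t * \<nu>\<^sup>2 \<le> 1"
      using elim(3) by (simp_all add: t_def \<nu>_def)
    define m where "m = t powr K * exp (- b' * (ustar + 1)) / C'"
    have m: "0 < m" using t C' by (simp add: m_def)
    have "m \<le> \<pi> n u" if "ustar \<le> u" "u \<le> ustar + 1" for u
    proof -
      have "t powr K * exp (- b' * (ustar + 1)) \<le> t powr K * exp (- b' * u)"
        using that b' by (intro mult_left_mono) auto
      also have "\<dots> \<le> C' * \<pi> n u" using elim(1) that by (simp add: t_def)
      finally show ?thesis using C' by (simp add: m_def divide_le_eq mult.commute)
    qed
    then have "0 < (LBINT u:{t * \<nu>\<^sup>2..}. min u (\<nu> ^ 3 / sqrt u) * \<pi> n u)"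
      using t \<nu> s ustar by (intro condition3_integral_pos[OF dens \<nu> _ _ m, where U=ustar]) auto
    moreover have "0 \<le> (LBINT u:{1..\<nu>\<^sup>2}. \<pi> n u / sqrt u)"
      using dens[of n] by (intro set_integral_nonneg) (auto simp: is_density_pos_def)
    then have "0 \<le> \<nu> * (LBINT u:{1..\<nu>\<^sup>2}. \<pi> n u / sqrt u)" using \<nu> by simp
    moreover have "C * (t * \<nu>\<^sup>2) \<le> 0" using C t by (simp add: mult_nonpos_nonneg)
    ultimately show False using elim(2) unfolding t_def \<nu>_def by linarith
  qed
  then show False by simp
qed

lemma tau_n_tendsto_at_right:
  assumes "\<And>n. 0 < p n" and "(\<lambda>n. p n / real n) \<longlonglongrightarrow> 0"
  shows "filterlim (\<lambda>n. tau_n n (p n)) (at_right 0) sequentially"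
  unfolding tau_n_def
proof (rule tendsto_imp_filterlim_at_right[OF assms(2)])
  show "\<forall>\<^sub>F n in sequentially. 0 < p n / real n"
    using eventually_gt_at_top[of 0] by eventually_elim (simp add: assms(1))
qed

theorem mainTheorem9:
  fixes \<pi> :: "nat \<Rightarrow> real \<Rightarrow> real" and p :: "nat \<Rightarrow> real"
    and C c \<alpha> :: real
  assumes dens: "\<And>n. is_density_pos (\<pi> n)"
    and ppos: "\<And>n. p n > 0"
    and plim: "(\<lambda>n. p n / real n) \<longlonglongrightarrow> 0"
    and c1: "condition1 \<pi> p"
    and c2: "condition2 \<pi> c"
    and c3: "condition3 \<pi> p C"
    and alpha: "0 < \<alpha>" "\<alpha> < 1"
  shows "\<exists>\<epsilon> :: nat \<Rightarrow> real. \<epsilon> \<longlonglongrightarrow> 0 \<and>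
    (\<forall>\<^sub>F n in sequentially.
       measure (density lborel std_normal_density) {x. m_x (\<pi> n) x \<ge> \<alpha>}
         \<le> 8 * sqrt pi * C / (\<alpha> * c) * (p n / real n) * (1 + \<epsilon> n))"
proof -
  have tau: "filterlim (\<lambda>n. tau_n n (p n)) (at_right 0) sequentially"
    by (rule tau_n_tendsto_at_right[OF ppos plim])
  have C: "0 < C" by (rule condition3_const_pos[OF dens c1 c3 tau])
  from c2 have c: "0 < c" and mass: "\<forall>\<^sub>F n in sequentially. c \<le> (LBINT u:{0..1}. \<pi> n u)"
    unfolding condition2_def by auto
  have "\<forall>\<^sub>F n in sequentially.
      measure (density lborel std_normal_density) {x. \<alpha> \<le> m_x (\<pi> n) x}
        \<le> 8 * sqrt pi * C / (\<alpha> * c) * tau_n n (p n)"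
    using mass c3[unfolded condition3_def nu_n_eq s_n_def]
      eventually_compose_filterlim[OF eventually_log_scale tau]
      eventually_compose_filterlim[OF eventually_tail_level[OF C c alpha(1)] tau]
    by eventually_elim (intro prob_m_x_ge_le[OF dens c _ C alpha(1)]; simp)
  then show ?thesis by (intro exI[of _ "\<lambda>_. 0"]) (simp add: tau_n_def)
qed

end
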